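(* Let $\lambda_1,\dots,\lambda_J>0$, $\lambda_{\max}=\max_j\lambda_j$, $\Gamma\ge0$ with $\min_j\lambda_j\Gamma\ge e^{2e}$, and let $(U^j_k)_{k\ge1}$ be nonnegative reals satisfying $\big|\sum_{i=1}^kU^j_i-\lambda_j^{-1}k\big|\le\Gamma\,\phi(k)$ for all $k\ge1$ and all $j$. Let $A_j(t)=\max\{k\ge0:\sum_{i=1}^kU^j_i\le t\}$. Then for every $t$ with $$t\ge\max_j\big(\lambda_j^{-1}e^e,\ \lambda_j^{-1}+3\lambda_j^{-1}\lambda_{\max}^2\Gamma^2\big),$$ we have $A_j(t)\le t\lambda_j+3\lambda_j^2\Gamma^2\phi(t\lambda_j)$ for every $j$.
   Context: $\phi(x)=\sqrt{x\ln\ln x}$ for $x\ge e^e$ and $\phi(x)=1$ for $x<e^e$. *)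

theory Defs
  imports Complex_Main
begin

definition phi :: "real \<Rightarrow> real" where
  "phi x = (if x \<ge> exp (exp 1) then sqrt (x * ln (ln x)) else 1)"

definition count_proc :: "(nat \<Rightarrow> real) \<Rightarrow> real \<Rightarrow> nat" where
  "count_proc U t = Max {k. (\<Sum>i=1..k. U i) \<le> t}"

end

theory Submission
  imports Defs
begin

(* Fix a coordinate j and rescale: with x = t * lam j and c = lam j * Gamma, every
   k counted by A_j(t) satisfies, by the deviation bound on the partial sums,
        k <= x + c * phi k.
   The heart of the argument is an inversion of this implicit inequality:
        k <= x + c * phi k   implies   k <= x + 3 c^2 * phi x,
   valid as soon as c >= 9, x >= e^e and x >= 1 + 3 c^2.  It is proved by three cases:
   k < e^e (then phi k = 1), e^e <= k <= 2x (then phi k <= 2 phi x by a doubling property of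
   phi), and k > 2x (then k < 4 c^2 ln ln k, which forces k <= 5 c^3 <= 3 c^2 phi x).  The main theorem follows coordinatewise, since Min lam * Gamma >= e^(2e) >= 9
   and lam j <= Max lam turn the hypotheses into those of the single-sequence version. *)

lemma above_exp_exp:
  fixes x :: real assumes "x \<ge> exp (exp 1)"
  shows "x > 1" "ln x \<ge> 2" "ln (ln x) \<ge> 1"
proof -
  have e2: "exp 1 \<ge> (2::real)" using exp_ge_add_one_self[of 1] by simp
  have "exp (exp 1) \<ge> 1 + exp (1::real)" by simp
  then show x1: "x > 1" using assms e2 by linarith
  have lx: "ln x \<ge> exp 1"
    using ln_le_cancel_iff[of "exp (exp 1)" x] assms x1 by simp
  then show "ln x \<ge> 2" using e2 by linarith
  have "ln (exp 1) \<le> ln (ln x)"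
    using lx by (subst ln_le_cancel_iff) (auto intro: less_le_trans[OF exp_gt_zero])
  then show "ln (ln x) \<ge> 1" by simp
qed

lemma phi_ge_one: "phi y \<ge> 1"
proof (cases "y \<ge> exp (exp 1)")
  case True
  note facts = above_exp_exp[OF True]
  have "y * ln (ln y) \<ge> 1 * 1" using facts by (intro mult_mono) auto
  then show ?thesis using True by (simp add: phi_def)
qed (simp add: phi_def)

lemma phi_ge_sqrt: assumes "y \<ge> exp (exp 1)" shows "phi y \<ge> sqrt y"
proof -
  note facts = above_exp_exp[OF assms]
  have "y * ln (ln y) \<ge> y * 1" using facts by (intro mult_left_mono) auto
  then show ?thesis using assms by (simp add: phi_def)
qed

(* Doubling property: phi grows at most by a factor 2 when its argument is doubled,
   because ln ln (2x) <= ln ((ln x)^2) = 2 ln ln x for large x. *)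
lemma phi_doubling:
  fixes k x :: real
  assumes xe: "x \<ge> exp (exp 1)" and ke: "k \<ge> exp (exp 1)" and k2: "k \<le> 2 * x"
  shows "phi k \<le> 2 * phi x"
proof -
  note fx = above_exp_exp[OF xe] and fk = above_exp_exp[OF ke]
  have "ln k \<le> ln (2 * x)" using k2 fk by (subst ln_le_cancel_iff) auto
  also have "\<dots> = ln 2 + ln x" using fx by (simp add: ln_mult)
  also have "\<dots> \<le> ln x * ln x"
    using mult_right_mono[of 2 "ln x" "ln x"] ln_2_less_1 fx by linarith
  finally have "ln (ln k) \<le> ln (ln x * ln x)" using fk by (subst ln_le_cancel_iff) auto
  also have "\<dots> = 2 * ln (ln x)" using fx by (simp add: ln_mult)
  finally have "k * ln (ln k) \<le> (2 * x) * (2 * ln (ln x))"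
    using k2 fk by (intro mult_mono) auto
  then have "sqrt (k * ln (ln k)) \<le> sqrt (4 * (x * ln (ln x)))"
    by (intro real_sqrt_le_mono) (simp add: algebra_simps)
  also have "\<dots> = 2 * sqrt (x * ln (ln x))" by (simp add: real_sqrt_mult)
  finally show ?thesis using xe ke by (simp add: phi_def)
qed

(* The elementary bound ln y <= 2 sqrt y - 2, i.e. ln z <= z - 1 at z = sqrt y. *)
lemma ln_le_two_sqrt: assumes "(y::real) > 0" shows "ln y \<le> 2 * sqrt y - 2"
proof -
  have "ln (sqrt y) \<le> sqrt y - 1" using assms by (intro ln_le_minus_one) auto
  moreover have "ln (sqrt y) = ln y / 2" using assms by (simp add: ln_sqrt)
  ultimately show ?thesis by simp
qed

(* Solutions of k < 4 c^2 ln ln k are polynomially bounded in c: a crude bound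
   sqrt k < 8 c^2 gives ln ln k < 2 + sqrt c, which is fed back into the inequality. *)
lemma bound_from_loglog:
  fixes k c :: real
  assumes c9: "c \<ge> 9" and ke: "k \<ge> exp (exp 1)" and k_lt: "k < 4 * c^2 * ln (ln k)"
  shows "k \<le> 5 * c^3"
proof -
  note fk = above_exp_exp[OF ke]
  have k0: "k > 0" using fk by simp
  have ln8: "ln (8::real) = 3 * ln 2" using ln_realpow[of 2 3] by simp
  have lnc: "ln c \<le> 2 * sqrt c - 2" using c9 ln_le_two_sqrt by simp
  have sc: "sqrt c \<ge> 3" using c9 real_sqrt_le_mono[of 9 c] by simp
  have "ln (ln k) \<le> ln k - 1" using fk by (intro ln_le_minus_one) auto
  also have "\<dots> \<le> 2 * sqrt k" using ln_le_two_sqrt[OF k0] by simp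
  finally have "k < 4 * c^2 * (2 * sqrt k)"
    using k_lt c9 by (smt (verit) mult_left_mono zero_le_power2)
  then have "sqrt k * sqrt k < (8 * c^2) * sqrt k" using k0 by (simp add: algebra_simps)
  then have sk: "sqrt k < 8 * c^2" by (rule mult_right_less_imp_less) (use k0 in simp)
  have "ln k = 2 * ln (sqrt k)" using k0 by (simp add: ln_sqrt)
  also have "ln (sqrt k) < ln (8 * c^2)" using sk k0 by (subst ln_less_cancel_iff) auto
  also have "ln (8 * c^2) = 3 * ln 2 + 2 * ln c" using c9 by (simp add: ln_mult ln8 ln_realpow)
  finally have "ln k < 2 * (3 * ln 2 + 2 * ln c)" by simp
  then have "ln k < 8 * sqrt c" using lnc ln_2_less_1 by argo
  then have "ln (ln k) < ln (8 * sqrt c)" using fk c9 by (subst ln_less_cancel_iff) auto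
  also have "ln (8 * sqrt c) = 3 * ln 2 + ln c / 2" using c9 by (simp add: ln_mult ln_sqrt ln8)
  finally have "ln (ln k) < 2 + sqrt c" using ln_2_less_1 lnc by argo
  then have "k < 4 * c^2 * (2 + sqrt c)"
    using k_lt mult_left_mono[of "ln (ln k)" "2 + sqrt c" "4 * c^2"] by simp
  also have "\<dots> \<le> 5 * c^3"
  proof -
    have "3 * sqrt c \<le> sqrt c * sqrt c" using sc by (intro mult_right_mono) linarith+
    then have "3 * sqrt c \<le> c" using c9 by simp
    then have "4 * (2 + sqrt c) \<le> 5 * c" using c9 by argo
    then have "c^2 * (4 * (2 + sqrt c)) \<le> c^2 * (5 * c)" by (intro mult_left_mono) auto
    then show ?thesis by (simp add: algebra_simps power3_eq_cube power2_eq_square)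
  qed
  finally show ?thesis by simp
qed

(* Since x >= 3 c^2, we have phi x >= sqrt x >= 5c/3, hence 5 c^3 <= 3 c^2 phi x. *)
lemma cube_le_phi:
  fixes x c :: real
  assumes c0: "c \<ge> 0" and xe: "x \<ge> exp (exp 1)" and x3: "x \<ge> 1 + 3 * c^2"
  shows "5 * c^3 \<le> 3 * c^2 * phi x"
proof -
  have "(5 * c / 3)^2 = 25 / 9 * c^2" by (simp add: power2_eq_square)
  then have "(5 * c / 3)^2 \<le> x" using x3 zero_le_power2[of c] by linarith
  then have "5 * c / 3 \<le> sqrt x" by (rule real_le_rsqrt)
  also have "\<dots> \<le> phi x" by (rule phi_ge_sqrt[OF xe])
  finally have "c^2 * (5 * c / 3) \<le> c^2 * phi x" by (intro mult_left_mono) auto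
  then show ?thesis by (simp add: power3_eq_cube power2_eq_square field_simps)
qed

lemma implicit_bound_inversion:
  fixes k x c :: real
  assumes c9: "c \<ge> 9" and xe: "x \<ge> exp (exp 1)" and x3: "x \<ge> 1 + 3 * c^2"
    and kb: "k \<le> x + c * phi k"
  shows "k \<le> x + 3 * c^2 * phi x"
proof -
  have c_le_c2: "c \<le> c^2" using c9 mult_left_mono[of 1 c c] by (simp add: power2_eq_square)
  have "3 * c^2 * 1 \<le> 3 * c^2 * phi x" using phi_ge_one[of x] by (intro mult_left_mono) auto
  then have c3: "3 * c \<le> 3 * c^2 * phi x" using c_le_c2 by linarith
  consider "k < exp (exp 1)" | "exp (exp 1) \<le> k" "k \<le> 2 * x" | "exp (exp 1) \<le> k" "k > 2 * x"
    by linarith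
  then show ?thesis
  proof cases
    case 1
    then have "k \<le> x + c" using kb by (simp add: phi_def)
    then show ?thesis using c3 c9 by linarith
  next
    case 2
    have "c * phi k \<le> c * (2 * phi x)"
      using phi_doubling[OF xe 2] c9 by (intro mult_left_mono) auto
    also have "\<dots> = (2 * c) * phi x" by simp
    also have "\<dots> \<le> (3 * c^2) * phi x"
      using phi_ge_one[of x] c_le_c2 c9 by (intro mult_right_mono) auto
    finally show ?thesis using kb by linarith
  next
    case 3
    note fk = above_exp_exp[OF 3(1)]
    have "k < 2 * c * sqrt (k * ln (ln k))" using kb 3 by (simp add: phi_def)
    then have "k^2 < (2 * c * sqrt (k * ln (ln k)))^2"
      using fk by (intro power_strict_mono) auto
    also have "\<dots> = k * (4 * c^2 * ln (ln k))" using fk by (simp add: power_mult_distrib)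
    finally have "k < 4 * c^2 * ln (ln k)"
      using fk by (simp add: power2_eq_square mult_less_cancel_left)
    then have "k \<le> 5 * c^3" by (rule bound_from_loglog[OF c9 3(1)])
    then show ?thesis using cube_le_phi[OF _ xe x3] c9 above_exp_exp(1)[OF xe] by linarith
  qed
qed

(* If every k whose partial sum stays below t is at most B, then so is the counting process.
   The bound also makes the set of such k finite, so that its maximum exists. *)
lemma count_proc_le:
  fixes U :: "nat \<Rightarrow> real" and t B :: real
  assumes t0: "t \<ge> 0" and bound: "\<And>k. (\<Sum>i=1..k. U i) \<le> t \<Longrightarrow> real k \<le> B"
  shows "real (count_proc U t) \<le> B"
proof -
  define S where "S = {k. (\<Sum>i=1..k. U i) \<le> t}"
  have "S \<subseteq> {..nat \<lceil>B\<rceil>}"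
  proof
    fix k assume "k \<in> S"
    then have "real k \<le> B" using bound by (simp add: S_def)
    then show "k \<in> {..nat \<lceil>B\<rceil>}" by (simp add: le_nat_iff) linarith
  qed
  then have "finite S" by (rule finite_subset) simp
  moreover have "0 \<in> S" using t0 by (simp add: S_def)
  ultimately have "Max S \<in> S" by (intro Max_in) auto
  then show ?thesis using bound by (simp add: count_proc_def S_def)
qed

theorem count_proc_upper_bound:
  fixes U :: "nat \<Rightarrow> real" and l \<Gamma> t :: real
  assumes l0: "l > 0" and c9: "l * \<Gamma> \<ge> 9"
    and U_bound: "\<And>k. k \<ge> 1 \<Longrightarrow> \<bar>(\<Sum>i=1..k. U i) - real k / l\<bar> \<le> \<Gamma> * phi (real k)"
    and te: "t * l \<ge> exp (exp 1)" and t3: "t * l \<ge> 1 + 3 * (l * \<Gamma>)^2"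
  shows "real (count_proc U t) \<le> t * l + 3 * l^2 * \<Gamma>^2 * phi (t * l)"
proof -
  have bound_rhs: "t * l + 3 * (l * \<Gamma>)^2 * phi (t * l) = t * l + 3 * l^2 * \<Gamma>^2 * phi (t * l)"
    by (simp add: power_mult_distrib)
  have "t * l > 0" using te exp_gt_zero[of "exp 1"] by linarith
  then have t0: "t \<ge> 0" using l0 by (simp add: zero_less_mult_iff)
  have "real k \<le> t * l + 3 * l^2 * \<Gamma>^2 * phi (t * l)" if sum_le: "(\<Sum>i=1..k. U i) \<le> t" for k
  proof (cases "k = 0")
    case True
    then show ?thesis using t0 l0 phi_ge_one[of "t * l"] by simp
  next
    case False
    then have "real k / l \<le> t + \<Gamma> * phi (real k)" using U_bound[of k] sum_le by simp
    then have "real k \<le> t * l + (l * \<Gamma>) * phi (real k)" using l0 by (simp add: field_simps)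
    from implicit_bound_inversion[OF c9 te t3 this] show ?thesis using bound_rhs by simp
  qed
  then show ?thesis by (rule count_proc_le[OF t0])
qed

(* The hypothesis Min lam * Gamma >= e^(2e) is only used through this numerical consequence. *)
lemma exp_two_e_ge_nine: "exp (2 * exp 1) \<ge> (9::real)"
proof -
  have three: "exp (exp (1::real)) \<ge> 3"
    using exp_ge_add_one_self[of "exp 1"] exp_ge_add_one_self[of 1] by linarith
  have "exp (2 * exp 1) = exp (exp 1) * exp (exp (1::real))" by (simp flip: exp_add)
  also have "\<dots> \<ge> 3 * 3" using three by (intro mult_mono) auto
  finally show ?thesis by simp
qed

theorem mainTheorem7:
  fixes J :: nat and lam :: "nat \<Rightarrow> real" and \<Gamma> :: real
    and U :: "nat \<Rightarrow> nat \<Rightarrow> real" and t :: real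
  assumes J_pos: "J \<ge> 1"
    and lam_pos: "\<forall>j\<in>{1..J}. lam j > 0"
    and Gamma_nonneg: "\<Gamma> \<ge> 0"
    and min_cond: "Min (lam ` {1..J}) * \<Gamma> \<ge> exp (2 * exp 1)"
    and U_nonneg: "\<forall>j\<in>{1..J}. \<forall>k\<ge>1. U j k \<ge> 0"
    and U_bound: "\<forall>j\<in>{1..J}. \<forall>k\<ge>1.
        \<bar>(\<Sum>i=1..k. U j i) - real k / lam j\<bar> \<le> \<Gamma> * phi (real k)"
    and t_large: "\<forall>j\<in>{1..J}. t \<ge> exp (exp 1) / lam j
        \<and> t \<ge> 1 / lam j + 3 * (1 / lam j) * (Max (lam ` {1..J}))\<^sup>2 * \<Gamma>\<^sup>2"
  shows "\<forall>j\<in>{1..J}. real (count_proc (U j) t)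
           \<le> t * lam j + 3 * (lam j)\<^sup>2 * \<Gamma>\<^sup>2 * phi (t * lam j)"
proof
  fix j assume j: "j \<in> {1..J}"
  define M where "M = Max (lam ` {1..J})"
  have l0: "lam j > 0" using lam_pos j by auto
  have "Min (lam ` {1..J}) * \<Gamma> \<le> lam j * \<Gamma>"
    using j Gamma_nonneg by (intro mult_right_mono Min_le) auto
  then have c9: "lam j * \<Gamma> \<ge> 9" using min_cond exp_two_e_ge_nine by linarith
  have "(lam j * \<Gamma>)^2 \<le> (M * \<Gamma>)^2"
    using j l0 Gamma_nonneg by (intro power_mono mult_right_mono) (auto simp: M_def)
  moreover have "exp (exp 1) / lam j \<le> t" "(1 + 3 * (M * \<Gamma>)^2) / lam j \<le> t"
    using t_large j by (auto simp: M_def add_divide_distrib power_mult_distrib ac_simps)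
  then have "t * lam j \<ge> exp (exp 1)" "t * lam j \<ge> 1 + 3 * (M * \<Gamma>)^2"
    using l0 by (simp_all add: pos_divide_le_eq)
  ultimately show "real (count_proc (U j) t)
      \<le> t * lam j + 3 * (lam j)\<^sup>2 * \<Gamma>\<^sup>2 * phi (t * lam j)"
    using U_bound j by (intro count_proc_upper_bound[OF l0 c9]) auto
qed

end
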